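(* Let $p$ be a prime and let $c,e,j$ be residues mod $p$ with $c\notin\{0,1\}$, $j\notin\{0,1\}$ and $e\notin\{0,\,j,\,c,\,c+j-1,\,jc\}$. Let $m\ge 2$ be an integer dividing $p-1$. Define \[ F(x)=\frac{1-jx}{1-j},\qquad G(x)=\frac{e-xjc}{e-jc},\qquad H(x)=\frac{xj(1-c)+e-j}{e-jc}. \] Suppose there is $x\not\equiv 0$ which is an $m$th power mod $p$ such that $F(x)$ is a non-zero $m$th power mod $p$, and neither $G(x)$ nor $H(x)$ is a non-zero $m$th power mod $p$. Then the three cyclic transversals generated by $0\circ 0=0$, $0\circ 1=j$ and $0\circ c=e$, i.e. the partial latin square \[ \{(i,i,i),\ (i,1+i,j+i),\ (i,c+i,e+i)\mid 0\le i<p\}, \] can be completed to a diagonally cyclic latin square of order $p$.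
   Context: Triples $(r,s,t)$ denote symbol $t$ in row $r$, column $s$; all indices are modulo $p$. A latin square with operation $\circ$ of odd order $n$ is diagonally cyclic if $i\circ j=k$ implies $(i+1)\circ(j+1)=k+1$ for all cells. A partial latin square is completed by a latin square if it is contained in it (as a set of triples). *)

theory Defs
  imports "HOL-Number_Theory.Number_Theory"
begin

definition latin_square :: "int \<Rightarrow> (int \<Rightarrow> int \<Rightarrow> int) \<Rightarrow> bool" where
  "latin_square n op \<longleftrightarrow>
     (\<forall>r\<in>{0..<n}. bij_betw (\<lambda>s. op r s) {0..<n} {0..<n}) \<and>
     (\<forall>s\<in>{0..<n}. bij_betw (\<lambda>r. op r s) {0..<n} {0..<n})"

definition diag_cyclic :: "int \<Rightarrow> (int \<Rightarrow> int \<Rightarrow> int) \<Rightarrow> bool" where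
  "diag_cyclic n op \<longleftrightarrow>
     (\<forall>r\<in>{0..<n}. \<forall>s\<in>{0..<n}. op ((r + 1) mod n) ((s + 1) mod n) = (op r s + 1) mod n)"

definition triples :: "int \<Rightarrow> (int \<Rightarrow> int \<Rightarrow> int) \<Rightarrow> (int \<times> int \<times> int) set" where
  "triples n op = {(r, s, op r s) | r s. r \<in> {0..<n} \<and> s \<in> {0..<n}}"

definition zdiv :: "int \<Rightarrow> int \<Rightarrow> int \<Rightarrow> int" where
  "zdiv p a b = (THE z. 0 \<le> z \<and> z < p \<and> [b * z = a] (mod p))"

definition mth_power :: "int \<Rightarrow> nat \<Rightarrow> int \<Rightarrow> bool" where
  "mth_power p m z \<longleftrightarrow> (\<exists>y::int. [y ^ m = z] (mod p))"

definition nonzero_mth_power :: "int \<Rightarrow> nat \<Rightarrow> int \<Rightarrow> bool" where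
  "nonzero_mth_power p m z \<longleftrightarrow> \<not> [z = 0] (mod p) \<and> mth_power p m z"

end

theory Submission
  imports Defs
begin

text \<open>A function \<open>g\<close> on the residues mod \<open>p\<close> such that \<open>g\<close> and \<open>g - id\<close> are
permutations (an orthomorphism) yields the diagonally cyclic latin square
\<open>r \<circ> s = g (s - r) + r\<close>, which contains the three cyclic transversals exactly when
\<open>g 0 = 0\<close>, \<open>g 1 = j\<close> and \<open>g c = e\<close>.  We take \<open>g d = f (t + d) - f t\<close>, where \<open>f\<close>
multiplies by \<open>j\<close> on the union \<open>D\<close> of the cyclotomic classes (cosets of the
nonzero \<open>m\<close>-th powers) of \<open>t\<close> and \<open>t + 1\<close>, and by \<open>j x\<close> elsewhere.  Because \<open>x\<close> and
\<open>F(x) = (j x - 1) / (j - 1)\<close> are nonzero \<open>m\<close>-th powers, \<open>f\<close> and \<open>f - id\<close> are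
permutations.  Then \<open>g 0 = 0\<close> and \<open>g 1 = j\<close>, and \<open>t\<close> is chosen with
\<open>j (x - 1) t = e - j x c\<close>, so that \<open>g c = e\<close> as long as \<open>t + c \<notin> D\<close>.  The latter holds because
\<open>t / (t + c) = G(x)\<close> and \<open>(t + 1) / (t + c) = H(x)\<close> are not \<open>m\<close>-th powers.\<close>

lemma coprime_if_not_cong_0:
  fixes p a :: int
  assumes "prime p" "\<not> [a = 0] (mod p)"
  shows "coprime a p"
  using assms by (metis cong_0_iff prime_imp_coprime_int coprime_commute)

lemma cong_zdiv:
  fixes p a b :: int
  assumes "prime p" "\<not> [b = 0] (mod p)"
  shows "[b * zdiv p a b = a] (mod p)"
proof -
  have cop: "coprime b p" using coprime_if_not_cong_0[OF assms] .
  obtain b' where b': "[b * b' = 1] (mod p)" using cong_solve_coprime_int[OF cop] by blast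
  have "p > 0" using assms(1) prime_gt_0_int by blast
  define z where "z = (a * b') mod p"
  have z: "0 \<le> z \<and> z < p \<and> [b * z = a] (mod p)"
  proof -
    have "[b * z = b * (a * b')] (mod p)"
      unfolding z_def by (rule cong_scalar_left) simp
    also have "b * (a * b') = (b * b') * a" by (simp add: ac_simps)
    also have "[(b * b') * a = 1 * a] (mod p)" using b' by (rule cong_scalar_right)
    finally show ?thesis using \<open>p > 0\<close> by (simp add: z_def)
  qed
  have "z' = z" if "0 \<le> z' \<and> z' < p \<and> [b * z' = a] (mod p)" for z'
  proof -
    have "[b * z' = b * z] (mod p)" using that z cong_sym cong_trans by blast
    then have "[z' = z] (mod p)" using cong_mult_lcancel[OF cop] by blast
    then show ?thesis using that z cong_less_imp_eq_int by blast
  qed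
  then have "zdiv p a b = z" unfolding zdiv_def using z by (rule the_equality[rotated])
  then show ?thesis using z by simp
qed

lemma nonzero_mth_power_one:
  "prime (p::int) \<Longrightarrow> nonzero_mth_power p m 1"
  by (auto simp: nonzero_mth_power_def mth_power_def cong_0_iff intro: exI[of _ 1])

lemma nonzero_mth_power_mult:
  fixes p a b :: int
  assumes "prime p" "nonzero_mth_power p m a" "nonzero_mth_power p m b"
  shows "nonzero_mth_power p m (a * b)"
proof -
  obtain u v where "[u ^ m = a] (mod p)" "[v ^ m = b] (mod p)"
    using assms by (auto simp: nonzero_mth_power_def mth_power_def)
  then have "[(u * v) ^ m = a * b] (mod p)" by (simp add: power_mult_distrib cong_mult)
  moreover have "\<not> [a * b = 0] (mod p)"
    using assms by (auto simp: nonzero_mth_power_def cong_0_iff prime_dvd_mult_iff)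
  ultimately show ?thesis by (auto simp: nonzero_mth_power_def mth_power_def)
qed

lemma nonzero_mth_power_inverse:
  fixes p h h' :: int
  assumes p: "prime p" and h: "nonzero_mth_power p m h" and hh': "[h * h' = 1] (mod p)"
  shows "nonzero_mth_power p m h'"
proof -
  obtain u where u: "[u ^ m = h] (mod p)"
    using h by (auto simp: nonzero_mth_power_def mth_power_def)
  have "\<not> [h' = 0] (mod p)"
  proof
    assume "[h' = 0] (mod p)"
    then have "[h * h' = 0] (mod p)" using cong_scalar_left by fastforce
    with hh' have "[1 = 0] (mod p)" using cong_sym cong_trans by blast
    then show False using prime_gt_1_int[OF p] by (simp add: cong_0_iff)
  qed
  moreover have "[(h' * u ^ (m - 1)) ^ m = h'] (mod p)"
  proof (cases m)
    case 0
    then have "[h' = h * h'] (mod p)" using cong_scalar_right[OF u, of h'] by simp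
    from cong_trans[OF this hh'] show ?thesis using 0 by (simp add: cong_sym_eq)
  next
    case (Suc k)
    \<comment> \<open>\<open>h' * u ^ (m - 1)\<close> is an inverse of \<open>u\<close>\<close>
    have "(h' * u ^ (m - 1)) ^ m = h' * (h' * u ^ m) ^ k"
      by (simp add: Suc power_mult_distrib power_mult[symmetric] ac_simps)
    also have "[\<dots> = h' * (h' * h) ^ k] (mod p)"
      using u by (intro cong_scalar_left cong_pow) simp
    also have "[h' * (h' * h) ^ k = h' * 1 ^ k] (mod p)"
      using hh' by (intro cong_scalar_left cong_pow) (simp add: mult.commute)
    finally show ?thesis by simp
  qed
  ultimately show ?thesis by (auto simp: nonzero_mth_power_def mth_power_def)
qed

lemma nonzero_mth_power_if_cong_mult:
  fixes p h q a :: int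
  assumes p: "prime p" and h: "nonzero_mth_power p m h" and a: "\<not> [a = 0] (mod p)"
    and eq: "[a * (h * q) = a] (mod p)"
  shows "nonzero_mth_power p m q"
proof -
  have "[a * (h * q) = a * 1] (mod p)" using eq by simp
  then have "[h * q = 1] (mod p)"
    using cong_mult_lcancel[OF coprime_if_not_cong_0[OF p a]] by blast
  then show ?thesis by (rule nonzero_mth_power_inverse[OF p h])
qed

definition mth_power_stable :: "int \<Rightarrow> nat \<Rightarrow> int set \<Rightarrow> bool" where
  "mth_power_stable p m D \<longleftrightarrow>
     (\<forall>y h y'. y \<in> D \<longrightarrow> nonzero_mth_power p m h \<longrightarrow> [y' = h * y] (mod p) \<longrightarrow> y' \<in> D)"

lemma mth_power_stableD:
  "mth_power_stable p m D \<Longrightarrow> y \<in> D \<Longrightarrow> nonzero_mth_power p m h \<Longrightarrow> [y' = h * y] (mod p)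
    \<Longrightarrow> y' \<in> D"
  unfolding mth_power_stable_def by blast

lemma mth_power_stable_cong:
  assumes "prime p" "mth_power_stable p m D" "[y = y'] (mod p)"
  shows "y \<in> D \<longleftrightarrow> y' \<in> D"
  using mth_power_stableD[OF assms(2) _ nonzero_mth_power_one[OF assms(1)]] assms(3)
  by (auto simp: cong_sym_eq)

lemma mth_power_stable_cancel:
  assumes p: "prime p" and D: "mth_power_stable p m D" and h: "nonzero_mth_power p m h"
    and y': "[y' = h * y] (mod p)" "y' \<in> D"
  shows "y \<in> D"
proof -
  have "\<not> [h = 0] (mod p)" using h by (simp add: nonzero_mth_power_def)
  then obtain h' where hh': "[h * h' = 1] (mod p)"
    using cong_solve_coprime_int coprime_if_not_cong_0 p by blast
  have "[y = h' * y'] (mod p)"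
  proof -
    have "[h' * y' = h' * (h * y)] (mod p)" using y'(1) by (rule cong_scalar_left)
    also have "h' * (h * y) = (h * h') * y" by (simp add: ac_simps)
    also have "[(h * h') * y = 1 * y] (mod p)" using hh' by (rule cong_scalar_right)
    finally show ?thesis by (simp add: cong_sym_eq)
  qed
  then show ?thesis
    using mth_power_stableD[OF D y'(2) nonzero_mth_power_inverse[OF p h hh']] by blast
qed

lemma mth_power_stable_Un:
  "mth_power_stable p m D \<Longrightarrow> mth_power_stable p m E \<Longrightarrow> mth_power_stable p m (D \<union> E)"
  unfolding mth_power_stable_def by blast

definition mth_power_class :: "int \<Rightarrow> nat \<Rightarrow> int \<Rightarrow> int set" where
  "mth_power_class p m w = {y. \<exists>h. nonzero_mth_power p m h \<and> [y = h * w] (mod p)}"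

lemma mem_mth_power_class_self: "prime p \<Longrightarrow> w \<in> mth_power_class p m w"
  unfolding mth_power_class_def by (auto intro!: exI[of _ 1] nonzero_mth_power_one)

lemma mth_power_stable_class:
  assumes "prime p"
  shows "mth_power_stable p m (mth_power_class p m w)"
  unfolding mth_power_stable_def
proof (intro allI impI)
  fix y h y'
  assume "y \<in> mth_power_class p m w" and h: "nonzero_mth_power p m h" and y': "[y' = h * y] (mod p)"
  then obtain k where k: "nonzero_mth_power p m k" "[y = k * w] (mod p)"
    unfolding mth_power_class_def by blast
  have "[y' = (h * k) * w] (mod p)"
    using cong_trans[OF y' cong_scalar_left[OF k(2)]] by (simp add: ac_simps)
  then show "y' \<in> mth_power_class p m w"
    using nonzero_mth_power_mult[OF assms h k(1)] unfolding mth_power_class_def by blast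
qed

lemma not_mem_mth_power_class:
  fixes p k y w q a :: int
  assumes p: "prime p" and a: "\<not> [a = 0] (mod p)"
    and y: "[k * y = a] (mod p)" and w: "[k * w = a * q] (mod p)"
    and q: "\<not> nonzero_mth_power p m q"
  shows "y \<notin> mth_power_class p m w"
proof
  assume "y \<in> mth_power_class p m w"
  then obtain h where h: "nonzero_mth_power p m h" "[y = h * w] (mod p)"
    unfolding mth_power_class_def by blast
  have "a * (h * q) = h * (a * q)" by (simp add: ac_simps)
  also have "[\<dots> = h * (k * w)] (mod p)" using w by (simp add: cong_scalar_left cong_sym_eq)
  also have "h * (k * w) = k * (h * w)" by (simp add: ac_simps)
  also have "[k * (h * w) = k * y] (mod p)" using h(2) by (simp add: cong_scalar_left cong_sym_eq)
  also note y
  finally show False using nonzero_mth_power_if_cong_mult[OF p h(1) a] q by blast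
qed

definition piecewise_mult :: "int set \<Rightarrow> int \<Rightarrow> int \<Rightarrow> int \<Rightarrow> int" where
  "piecewise_mult D a b y = (if y \<in> D then a * y else b * y)"

lemma piecewise_mult_cong:
  assumes "prime p" "mth_power_stable p m D" "[y = y'] (mod p)"
  shows "[piecewise_mult D a b y = piecewise_mult D a b y'] (mod p)"
  using mth_power_stable_cong[OF assms] assms(3)
  by (simp add: piecewise_mult_def cong_scalar_left)

lemma piecewise_mult_cancel:
  assumes p: "prime p" and D: "mth_power_stable p m D"
    and a: "\<not> [a = 0] (mod p)" and z: "nonzero_mth_power p m z" and b: "[b = a * z] (mod p)"
    and eq: "[piecewise_mult D a b y1 = piecewise_mult D a b y2] (mod p)"
  shows "[y1 = y2] (mod p)"
proof -
  have cop_a: "coprime a p" using coprime_if_not_cong_0[OF p a] .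
  have "\<not> [a * z = 0] (mod p)"
    using a z p by (auto simp: nonzero_mth_power_def cong_0_iff prime_dvd_mult_iff)
  then have "\<not> [b = 0] (mod p)" using cong_trans[OF cong_sym[OF b]] by blast
  then have cop_b: "coprime b p" using coprime_if_not_cong_0[OF p] by blast
  have mixed: "v \<in> D" if "u \<in> D" "[a * u = b * v] (mod p)" for u v
  proof -
    have "[a * u = a * (z * v)] (mod p)"
      using cong_trans[OF that(2) cong_scalar_right[OF b]] by (simp add: ac_simps)
    then have "[u = z * v] (mod p)" using cong_mult_lcancel[OF cop_a] by blast
    then show ?thesis using mth_power_stable_cancel[OF p D z] that(1) by blast
  qed
  show ?thesis
  proof (cases "y1 \<in> D"; cases "y2 \<in> D")
    assume "y1 \<in> D" "y2 \<in> D"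
    then show ?thesis using eq cong_mult_lcancel[OF cop_a] by (simp add: piecewise_mult_def)
  next
    assume "y1 \<notin> D" "y2 \<notin> D"
    then show ?thesis using eq cong_mult_lcancel[OF cop_b] by (simp add: piecewise_mult_def)
  next
    assume "y1 \<in> D" "y2 \<notin> D"
    then show ?thesis using eq mixed by (simp add: piecewise_mult_def)
  next
    assume "y1 \<notin> D" "y2 \<in> D"
    then show ?thesis using eq mixed by (simp add: piecewise_mult_def cong_sym_eq)
  qed
qed

definition orthomorphism :: "int \<Rightarrow> (int \<Rightarrow> int) \<Rightarrow> bool" where
  "orthomorphism p g \<longleftrightarrow>
     (\<forall>a b. [g a = g b] (mod p) \<longleftrightarrow> [a = b] (mod p)) \<and>
     (\<forall>a b. [g a - a = g b - b] (mod p) \<longrightarrow> [a = b] (mod p))"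

lemma orthomorphism_cong_iff:
  "orthomorphism p g \<Longrightarrow> [g a = g b] (mod p) \<longleftrightarrow> [a = b] (mod p)"
  unfolding orthomorphism_def by blast

lemma orthomorphism_cong:
  "orthomorphism p g \<Longrightarrow> [a = b] (mod p) \<Longrightarrow> [g a = g b] (mod p)"
  by (simp add: orthomorphism_cong_iff)

lemma orthomorphism_diff_cancel:
  "orthomorphism p g \<Longrightarrow> [g a - a = g b - b] (mod p) \<Longrightarrow> [a = b] (mod p)"
  unfolding orthomorphism_def by blast

lemma orthomorphism_piecewise_mult:
  assumes p: "prime p" and D: "mth_power_stable p m D"
    and a: "\<not> [a = 0] (mod p)" "\<not> [a - 1 = 0] (mod p)"
    and z: "nonzero_mth_power p m z" "[b = a * z] (mod p)"
    and z': "nonzero_mth_power p m z'" "[b - 1 = (a - 1) * z'] (mod p)"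
  shows "orthomorphism p (piecewise_mult D a b)"
proof -
  have shift: "piecewise_mult D a b y - y = piecewise_mult D (a - 1) (b - 1) y" for y
    by (simp add: piecewise_mult_def algebra_simps)
  show ?thesis
    unfolding orthomorphism_def
  proof (intro conjI allI iffI impI)
    fix y1 y2
    assume "[piecewise_mult D a b y1 = piecewise_mult D a b y2] (mod p)"
    then show "[y1 = y2] (mod p)" by (rule piecewise_mult_cancel[OF p D a(1) z])
  next
    fix y1 y2
    assume "[y1 = y2] (mod p)"
    then show "[piecewise_mult D a b y1 = piecewise_mult D a b y2] (mod p)"
      by (rule piecewise_mult_cong[OF p D])
  next
    fix y1 y2
    assume "[piecewise_mult D a b y1 - y1 = piecewise_mult D a b y2 - y2] (mod p)"
    then show "[y1 = y2] (mod p)" unfolding shift by (rule piecewise_mult_cancel[OF p D a(2) z'])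
  qed
qed

lemma orthomorphism_shift:
  assumes "orthomorphism p f"
  shows "orthomorphism p (\<lambda>d. f (t + d) - f t)"
  unfolding orthomorphism_def
proof (intro conjI allI impI)
  fix a b
  have "[f (t + a) - f t = f (t + b) - f t] (mod p) \<longleftrightarrow> [f (t + a) = f (t + b)] (mod p)"
    by (simp add: cong_iff_dvd_diff)
  also have "\<dots> \<longleftrightarrow> [t + a = t + b] (mod p)" by (rule orthomorphism_cong_iff[OF assms])
  also have "\<dots> \<longleftrightarrow> [a = b] (mod p)" by (rule cong_add_lcancel)
  finally show "[f (t + a) - f t = f (t + b) - f t] (mod p) \<longleftrightarrow> [a = b] (mod p)" .
next
  fix a b
  assume "[f (t + a) - f t - a = f (t + b) - f t - b] (mod p)"
  then have "[f (t + a) - (t + a) = f (t + b) - (t + b)] (mod p)"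
    by (simp add: cong_iff_dvd_diff algebra_simps)
  then have "[t + a = t + b] (mod p)" by (rule orthomorphism_diff_cancel[OF assms])
  then show "[a = b] (mod p)" by (simp add: cong_add_lcancel)
qed

definition orthomorphism_square :: "int \<Rightarrow> (int \<Rightarrow> int) \<Rightarrow> int \<Rightarrow> int \<Rightarrow> int" where
  "orthomorphism_square p g r s = (g (s - r) + r) mod p"

lemma bij_betw_mod_if_cong_inj:
  fixes p :: int
  assumes "p > 0"
    and "\<And>a b. a \<in> {0..<p} \<Longrightarrow> b \<in> {0..<p} \<Longrightarrow> [\<phi> a = \<phi> b] (mod p) \<Longrightarrow> [a = b] (mod p)"
  shows "bij_betw (\<lambda>a. \<phi> a mod p) {0..<p} {0..<p}"
proof -
  have "inj_on (\<lambda>a. \<phi> a mod p) {0..<p}"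
  proof (rule inj_onI)
    fix a b
    assume ab: "a \<in> {0..<p}" "b \<in> {0..<p}" "\<phi> a mod p = \<phi> b mod p"
    then have "[a = b] (mod p)" using assms(2) unfolding cong_def by blast
    then show "a = b" using ab(1,2) cong_less_imp_eq_int by auto
  qed
  moreover have "(\<lambda>a. \<phi> a mod p) ` {0..<p} \<subseteq> {0..<p}" using assms(1) by auto
  ultimately show ?thesis by (simp add: bij_betw_def endo_inj_surj)
qed

lemma latin_square_orthomorphism_square:
  assumes "p > 0" and g: "orthomorphism p g"
  shows "latin_square p (orthomorphism_square p g)"
  unfolding latin_square_def orthomorphism_square_def
proof (intro conjI ballI bij_betw_mod_if_cong_inj[OF \<open>p > 0\<close>])
  fix r s1 s2
  assume "[g (s1 - r) + r = g (s2 - r) + r] (mod p)"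
  then have "[s1 - r = s2 - r] (mod p)" by (simp add: cong_add_rcancel orthomorphism_cong_iff[OF g])
  then show "[s1 = s2] (mod p)" by (simp add: cong_iff_dvd_diff)
next
  fix s r1 r2
  assume "[g (s - r1) + r1 = g (s - r2) + r2] (mod p)"
  then have "[g (s - r1) - (s - r1) = g (s - r2) - (s - r2)] (mod p)"
    by (simp add: cong_iff_dvd_diff algebra_simps)
  then have "[s - r1 = s - r2] (mod p)" by (rule orthomorphism_diff_cancel[OF g])
  then show "[r1 = r2] (mod p)" by (simp add: cong_iff_dvd_diff dvd_diff_commute)
qed

lemma diag_cyclic_orthomorphism_square:
  assumes g: "orthomorphism p g"
  shows "diag_cyclic p (orthomorphism_square p g)"
  unfolding diag_cyclic_def
proof (intro ballI)
  fix r s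
  have "[(s + 1) mod p - (r + 1) mod p = (s + 1) - (r + 1)] (mod p)" by (intro cong_diff) simp_all
  then have "[g ((s + 1) mod p - (r + 1) mod p) = g (s - r)] (mod p)"
    using orthomorphism_cong[OF g] by simp
  then have "[g ((s + 1) mod p - (r + 1) mod p) + (r + 1) mod p = g (s - r) + (r + 1)] (mod p)"
    by (rule cong_add) simp
  then show "orthomorphism_square p g ((r + 1) mod p) ((s + 1) mod p) = (orthomorphism_square p g r s + 1) mod p"
    by (simp add: orthomorphism_square_def cong_def mod_simps ac_simps)
qed

lemma triple_in_orthomorphism_square:
  assumes "p > 0" and g: "orthomorphism p g" and "i \<in> {0..<p}" and v: "[g d = v] (mod p)"
  shows "(i, (d + i) mod p, (v + i) mod p) \<in> triples p (orthomorphism_square p g)"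
proof -
  have "[(d + i) mod p - i = d + i - i] (mod p)" by (intro cong_diff) simp_all
  then have "[g ((d + i) mod p - i) = v] (mod p)"
    using cong_trans[OF orthomorphism_cong[OF g] v] by simp
  then have "[g ((d + i) mod p - i) + i = v + i] (mod p)" by (rule cong_add) simp
  then have "orthomorphism_square p g i ((d + i) mod p) = (v + i) mod p"
    by (simp add: orthomorphism_square_def cong_def)
  then show ?thesis
    using assms(1,3) unfolding triples_def by force
qed

lemma orthomorphism_square_completion:
  fixes p j c e :: int
  assumes "p > 0" and g: "orthomorphism p g"
    and "[g 0 = 0] (mod p)" "[g 1 = j] (mod p)" "[g c = e] (mod p)"
  shows "\<exists>op. latin_square p op \<and> diag_cyclic p op \<and>
           {(i, i, i) | i. i \<in> {0..<p}}
           \<union> {(i, (1 + i) mod p, (j + i) mod p) | i. i \<in> {0..<p}}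
           \<union> {(i, (c + i) mod p, (e + i) mod p) | i. i \<in> {0..<p}}
           \<subseteq> triples p op"
proof (intro exI conjI)
  show "latin_square p (orthomorphism_square p g)"
    by (rule latin_square_orthomorphism_square[OF \<open>p > 0\<close> g])
  show "diag_cyclic p (orthomorphism_square p g)"
    by (rule diag_cyclic_orthomorphism_square[OF g])
  note triple = triple_in_orthomorphism_square[OF \<open>p > 0\<close> g]
  show "{(i, i, i) | i. i \<in> {0..<p}}
      \<union> {(i, (1 + i) mod p, (j + i) mod p) | i. i \<in> {0..<p}}
      \<union> {(i, (c + i) mod p, (e + i) mod p) | i. i \<in> {0..<p}}
      \<subseteq> triples p (orthomorphism_square p g)"
    using triple[of _ 0 0] triple[of _ 1 j] triple[of _ c e] assms(3-5) by auto
qed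

lemma shifted_orthomorphism_values:
  fixes p j x t c e :: int
  assumes p: "prime p" and D: "mth_power_stable p m D"
    and "t \<in> D" "t + 1 \<in> D" "t + c \<notin> D"
    and j: "\<not> [j = 0] (mod p)" "\<not> [j = 1] (mod p)"
    and x: "nonzero_mth_power p m x" and F: "nonzero_mth_power p m F" "[(1 - j) * F = 1 - j * x] (mod p)"
    and t: "[j * (x - 1) * t = e - x * j * c] (mod p)"
  defines "g \<equiv> \<lambda>d. piecewise_mult D j (j * x) (t + d) - piecewise_mult D j (j * x) t"
  shows "orthomorphism p g" "g 0 = 0" "g 1 = j" "[g c = e] (mod p)"
proof -
  have "\<not> [j - 1 = 0] (mod p)" using j(2) by (simp add: cong_iff_dvd_diff)
  moreover have "[j * x - 1 = (j - 1) * F] (mod p)"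
    using F(2) by (simp add: cong_iff_dvd_diff dvd_diff_commute algebra_simps)
  ultimately have "orthomorphism p (piecewise_mult D j (j * x))"
    using orthomorphism_piecewise_mult[OF p D j(1) _ x _ F(1)] by simp
  then show "orthomorphism p g" unfolding g_def by (rule orthomorphism_shift)
  show "g 0 = 0" "g 1 = j"
    using \<open>t \<in> D\<close> \<open>t + 1 \<in> D\<close> by (simp_all add: g_def piecewise_mult_def algebra_simps)
  have "g c = j * (x - 1) * t + x * j * c"
    using \<open>t \<in> D\<close> \<open>t + c \<notin> D\<close> by (simp add: g_def piecewise_mult_def algebra_simps)
  also have "[\<dots> = e] (mod p)" using cong_add[OF t cong_refl, of "x * j * c"] by simp
  finally show "[g c = e] (mod p)" .
qed

lemma orthomorphism_through_points:
  fixes p j c e x F G H :: int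
  assumes p: "prime p" and j: "\<not> [j = 0] (mod p)" "\<not> [j = 1] (mod p)"
    and ejc: "\<not> [e - j * c = 0] (mod p)"
    and x: "nonzero_mth_power p m x"
    and F: "nonzero_mth_power p m F" "[(1 - j) * F = 1 - j * x] (mod p)"
    and G: "\<not> nonzero_mth_power p m G" "[(e - j * c) * G = e - x * j * c] (mod p)"
    and H: "\<not> nonzero_mth_power p m H" "[(e - j * c) * H = x * j * (1 - c) + e - j] (mod p)"
  shows "\<exists>g. orthomorphism p g \<and> [g 0 = 0] (mod p) \<and> [g 1 = j] (mod p) \<and> [g c = e] (mod p)"
proof -
  have "\<not> [x = 1] (mod p)"
  proof
    assume "[x = 1] (mod p)"
    then have "[e - x * j * c = e - 1 * j * c] (mod p)"
      by (intro cong_diff cong_scalar_right) simp_all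
    with G(2) have "[(e - j * c) * (1 * G) = e - j * c] (mod p)" by (simp add: cong_trans)
    then show False
      using nonzero_mth_power_if_cong_mult[OF p nonzero_mth_power_one[OF p] ejc] G(1) by blast
  qed
  then have "\<not> [j * (x - 1) = 0] (mod p)"
    using j(1) p by (simp add: cong_0_iff cong_iff_dvd_diff prime_dvd_mult_iff)
  then obtain t where t: "[j * (x - 1) * t = e - x * j * c] (mod p)"
    using cong_zdiv[OF p] by blast
  define D where "D = mth_power_class p m t \<union> mth_power_class p m (t + 1)"
  have D: "mth_power_stable p m D"
    unfolding D_def by (intro mth_power_stable_Un mth_power_stable_class p)
  have "t \<in> D" "t + 1 \<in> D" unfolding D_def using mem_mth_power_class_self[OF p] by blast+
  have "t + c \<notin> D"
  proof -
    have "[j * (x - 1) * (t + c) = (e - x * j * c) + j * (x - 1) * c] (mod p)"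
      using cong_add[OF t cong_refl] by (simp add: distrib_left)
    then have "[j * (x - 1) * (t + c) = e - j * c] (mod p)" by (simp add: algebra_simps)
    moreover have "[j * (x - 1) * t = (e - j * c) * G] (mod p)"
      using cong_trans[OF t cong_sym[OF G(2)]] .
    moreover have "[j * (x - 1) * (t + 1) = (e - j * c) * H] (mod p)"
    proof -
      have "[j * (x - 1) * (t + 1) = (e - x * j * c) + j * (x - 1)] (mod p)"
        using cong_add[OF t cong_refl] by (simp add: distrib_left)
      also have "(e - x * j * c) + j * (x - 1) = x * j * (1 - c) + e - j" by (simp add: algebra_simps)
      also note cong_sym[OF H(2)]
      finally show ?thesis .
    qed
    ultimately show ?thesis
      unfolding D_def using not_mem_mth_power_class[OF p ejc] G(1) H(1) by blast
  qed
  from shifted_orthomorphism_values[OF p D \<open>t \<in> D\<close> \<open>t + 1 \<in> D\<close> this j x F t] show ?thesis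
    by (intro exI[of _ "\<lambda>d. piecewise_mult D j (j * x) (t + d) - piecewise_mult D j (j * x) t"]) simp
qed

theorem lemma4:
  fixes p :: int and m :: nat and c e j :: int
  assumes "prime p"
    and "\<not> [c = 0] (mod p)" and "\<not> [c = 1] (mod p)"
    and "\<not> [j = 0] (mod p)" and "\<not> [j = 1] (mod p)"
    and "\<not> [e = 0] (mod p)" and "\<not> [e = j] (mod p)" and "\<not> [e = c] (mod p)"
    and "\<not> [e = c + j - 1] (mod p)" and "\<not> [e = j * c] (mod p)"
    and "m \<ge> 2" and "int m dvd p - 1"
    and "\<exists>x. \<not> [x = 0] (mod p) \<and> mth_power p m x
           \<and> nonzero_mth_power p m (zdiv p (1 - j * x) (1 - j))
           \<and> \<not> nonzero_mth_power p m (zdiv p (e - x * j * c) (e - j * c))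
           \<and> \<not> nonzero_mth_power p m (zdiv p (x * j * (1 - c) + e - j) (e - j * c))"
  shows "\<exists>op. latin_square p op \<and> diag_cyclic p op \<and>
           {(i, i, i) | i. i \<in> {0..<p}}
           \<union> {(i, (1 + i) mod p, (j + i) mod p) | i. i \<in> {0..<p}}
           \<union> {(i, (c + i) mod p, (e + i) mod p) | i. i \<in> {0..<p}}
           \<subseteq> triples p op"
proof -
  \<comment> \<open>The conditions on \<open>c\<close> and \<open>e\<close> other than \<open>e \<noteq> j c\<close>, and those on \<open>m\<close>, only make the
    partial square a genuine one; the construction does not need them.\<close>
  obtain x where x: "nonzero_mth_power p m x"
    and F: "nonzero_mth_power p m (zdiv p (1 - j * x) (1 - j))"
    and G: "\<not> nonzero_mth_power p m (zdiv p (e - x * j * c) (e - j * c))"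
    and H: "\<not> nonzero_mth_power p m (zdiv p (x * j * (1 - c) + e - j) (e - j * c))"
    using assms(13) unfolding nonzero_mth_power_def by blast
  have "\<not> [1 - j = 0] (mod p)" using assms(5) by (simp add: cong_iff_dvd_diff dvd_diff_commute)
  note F_eq = cong_zdiv[OF \<open>prime p\<close> this]
  have "\<not> [e - j * c = 0] (mod p)" using assms(10) by (simp add: cong_iff_dvd_diff)
  note G_H_eq = cong_zdiv[OF \<open>prime p\<close> this]
  obtain g where "orthomorphism p g" "[g 0 = 0] (mod p)" "[g 1 = j] (mod p)" "[g c = e] (mod p)"
    using orthomorphism_through_points[OF \<open>prime p\<close> assms(4,5) \<open>\<not> [e - j * c = 0] (mod p)\<close> x
        F F_eq G G_H_eq H G_H_eq] by blast
  moreover have "p > 0" using \<open>prime p\<close> prime_gt_0_int by blast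
  ultimately show ?thesis using orthomorphism_square_completion by blast
qed

end
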